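(* If $G$ is a subcubic graph of order $n\ge 1$, then $\gamma_{e,f}^*(G)\ge \frac16\left(\sqrt{2n+\frac{49}{36}}+\frac76\right)$.
   Context: All graphs are finite, simple and undirected; subcubic means maximum degree at most $3$. The fractional porous exponential domination number $\gamma_{e,f}^*(G)$ is the optimum value of the linear program: minimize $\sum_{u\in V(G)}x(u)$ subject to $\sum_{u\in V(G)}\left(\frac12\right)^{\mathrm{dist}_G(u,v)-1}x(u)\ge 1$ for every $v\in V(G)$ and $x\ge 0$, where $\mathrm{dist}_G$ is the usual graph distance ($\infty$ between different components) and $\left(\frac12\right)^\infty=0$. *)

theory Defs
  imports Complex_Main "HOL-Library.Extended_Nat"
begin

definition simple_graph :: "'a set \<Rightarrow> ('a \<Rightarrow> 'a \<Rightarrow> bool) \<Rightarrow> bool" where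
  "simple_graph V E \<longleftrightarrow> finite V \<and> (\<forall>u v. E u v \<longrightarrow> u \<in> V \<and> v \<in> V)
     \<and> (\<forall>u v. E u v \<longrightarrow> E v u) \<and> (\<forall>u. \<not> E u u)"

definition degree :: "('a \<Rightarrow> 'a \<Rightarrow> bool) \<Rightarrow> 'a \<Rightarrow> nat" where
  "degree E u = card {v. E u v}"

definition subcubic :: "'a set \<Rightarrow> ('a \<Rightarrow> 'a \<Rightarrow> bool) \<Rightarrow> bool" where
  "subcubic V E \<longleftrightarrow> simple_graph V E \<and> (\<forall>u\<in>V. degree E u \<le> 3)"

inductive walk :: "'a set \<Rightarrow> ('a \<Rightarrow> 'a \<Rightarrow> bool) \<Rightarrow> 'a \<Rightarrow> 'a \<Rightarrow> nat \<Rightarrow> bool"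
  for V E where
  walk_nil: "u \<in> V \<Longrightarrow> walk V E u u 0"
| walk_step: "E u w \<Longrightarrow> walk V E w v k \<Longrightarrow> walk V E u v (Suc k)"

text \<open>Graph distance; infinity (top of enat) between different components.\<close>
definition gdist :: "'a set \<Rightarrow> ('a \<Rightarrow> 'a \<Rightarrow> bool) \<Rightarrow> 'a \<Rightarrow> 'a \<Rightarrow> enat" where
  "gdist V E u v = (INF k \<in> {k. walk V E u v k}. enat k)"

definition exp_weight :: "enat \<Rightarrow> real" where
  "exp_weight d = (case d of enat k \<Rightarrow> (1/2) powi (int k - 1) | \<infinity> \<Rightarrow> 0)"

definition frac_porous_exp_dom :: "'a set \<Rightarrow> ('a \<Rightarrow> 'a \<Rightarrow> bool) \<Rightarrow> real" where
  "frac_porous_exp_dom V E = Inf {(\<Sum>u\<in>V. x u) | x :: 'a \<Rightarrow> real.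
      (\<forall>u\<in>V. 0 \<le> x u) \<and>
      (\<forall>v\<in>V. (\<Sum>u\<in>V. exp_weight (gdist V E u v) * x u) \<ge> 1)}"

end

theory Submission imports Defs "HOL-Analysis.Convex" begin

text \<open>Let x be feasible with total weight S. Every vertex v is covered at least once; since
  v weighs itself with 2 and every other vertex with at most 1, this gives n \<le> (n + 1) S.
  By Cauchy--Schwarz the square of the coverage of v is at most S times the sum over u of
  x(u) w(u,v)^2, and in a subcubic graph the squared weights seen from any vertex sum to at
  most 10: breadth-first search from u has at most 3 vertices in the first layer and every
  later vertex has at most 2 children, while the squared weight drops by a factor 4 per
  layer, so the layers beyond the root contribute at most 6 to the root's 4. Summing over v
  gives n \<le> 10 S^2, and the two inequalities together yield the bound.\<close>

lemma walk_SucE: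
  assumes "simple_graph V E" and "walk V E u v (Suc k)"
  obtains w where "walk V E u w k" and "E w v"
proof -
  have "walk V E u v m \<Longrightarrow> m = Suc k \<Longrightarrow> \<exists>w. walk V E u w k \<and> E w v" for m k
  proof (induction arbitrary: k rule: walk.induct)
    case (walk_nil u) then show ?case by simp
  next
    case (walk_step u w v j)
    show ?case
    proof (cases j)
      case 0
      with walk_step.hyps(2) have "w = v" by (auto elim: walk.cases)
      moreover have "u \<in> V" using assms(1) walk_step.hyps(1) unfolding simple_graph_def by blast
      ultimately show ?thesis using walk_step 0 by (auto intro: walk.walk_nil)
    next
      case (Suc j')
      then obtain w' where "walk V E w w' j'" "E w' v" using walk_step.IH by blast
      then show ?thesis using walk_step Suc by (auto intro: walk.walk_step)
    qed
  qed
  then show ?thesis using assms(2) that by blast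
qed

lemma gdist_le_walk: "walk V E u v k \<Longrightarrow> gdist V E u v \<le> enat k"
  unfolding gdist_def by (rule INF_lower2[of k]) auto

lemma walk_if_gdist_eq_enat:
  assumes "gdist V E u v = enat k"
  shows "walk V E u v k"
proof -
  have "\<exists>k. walk V E u v k"
  proof (rule ccontr)
    assume "\<nexists>k. walk V E u v k"
    then have "gdist V E u v = \<infinity>" by (simp add: gdist_def top_enat_def)
    with assms show False by simp
  qed
  define m where "m = (LEAST k. walk V E u v k)"
  have walk_m: "walk V E u v m" using \<open>\<exists>k. walk V E u v k\<close> unfolding m_def by (rule LeastI_ex)
  have "gdist V E u v = enat m"
  proof (rule antisym)
    show "gdist V E u v \<le> enat m" using gdist_le_walk[OF walk_m] .
    show "enat m \<le> gdist V E u v" unfolding gdist_def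
      by (rule INF_greatest) (auto simp: m_def intro: Least_le)
  qed
  with assms walk_m show ?thesis by simp
qed

lemma gdist_self: "u \<in> V \<Longrightarrow> gdist V E u u = enat 0"
  using gdist_le_walk[OF walk.walk_nil, of u V E] by (simp add: zero_enat_def[symmetric])

lemma gdist_eq_0_imp_eq: "gdist V E u v = enat 0 \<Longrightarrow> u = v"
  by (auto dest: walk_if_gdist_eq_enat elim: walk.cases)

lemma gdist_predecessor:
  assumes "simple_graph V E" and "gdist V E u v = enat (Suc k)"
  obtains w j where "E w v" and "w \<in> V" and "gdist V E u w = enat j" and "j \<le> k"
proof -
  obtain w where w: "walk V E u w k" "E w v"
    using walk_SucE[OF assms(1) walk_if_gdist_eq_enat[OF assms(2)]] .
  have "gdist V E u w \<le> enat k" by (rule gdist_le_walk[OF w(1)])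
  then obtain j where "gdist V E u w = enat j" "j \<le> k"
    by (cases "gdist V E u w") simp_all
  moreover have "w \<in> V" using assms(1) w(2) by (simp add: simple_graph_def)
  ultimately show ?thesis using that w(2) by simp
qed

lemma gdist_parent_choice:
  assumes "simple_graph V E"
  obtains par where "\<And>v. v \<noteq> u \<Longrightarrow> gdist V E u v \<noteq> \<infinity> \<Longrightarrow>
    E (par v) v \<and> par v \<in> V \<and> gdist V E u (par v) \<noteq> \<infinity> \<and>
    the_enat (gdist V E u (par v)) < the_enat (gdist V E u v)"
proof -
  have "\<exists>w. E w v \<and> w \<in> V \<and> gdist V E u w \<noteq> \<infinity> \<and>
      the_enat (gdist V E u w) < the_enat (gdist V E u v)"
    if "v \<noteq> u" and finite_dist: "gdist V E u v \<noteq> \<infinity>" for v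
  proof -
    obtain m where m: "gdist V E u v = enat m" using finite_dist by auto
    with \<open>v \<noteq> u\<close> obtain k where "m = Suc k"
      using gdist_eq_0_imp_eq not0_implies_Suc by metis
    then obtain w j where "E w v" "w \<in> V" "gdist V E u w = enat j" "j \<le> k"
      using gdist_predecessor[OF assms] m by metis
    then show ?thesis using m \<open>m = Suc k\<close> by auto
  qed
  then show ?thesis using that by metis
qed

lemma exp_weight_enat: "exp_weight (enat k) = 2 * (1/2)^k"
proof -
  have "exp_weight (enat k) = (1/2::real) powi (int k - 1)" by (simp add: exp_weight_def)
  also have "\<dots> = (1/2) powi (int k) / (1/2) powi 1" by (rule power_int_diff) simp
  finally show ?thesis by simp
qed

lemma exp_weight_enat_squared: "(exp_weight (enat k))\<^sup>2 = 4 * (1/4)^k"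
  by (simp add: exp_weight_enat power_mult_distrib power2_eq_square flip: power_mult_distrib)

lemma exp_weight_nonneg: "exp_weight d \<ge> 0"
  by (cases d) (auto simp: exp_weight_enat exp_weight_def)

lemma exp_weight_gdist_self: "u \<in> V \<Longrightarrow> exp_weight (gdist V E u u) = 2"
  by (simp add: gdist_self exp_weight_enat)

lemma exp_weight_gdist_le_1:
  assumes "u \<noteq> v"
  shows "exp_weight (gdist V E u v) \<le> 1"
proof (cases "gdist V E u v")
  case (enat k)
  then have "k \<noteq> 0" using assms gdist_eq_0_imp_eq by metis
  then have "(1/2::real)^k \<le> 1/2" using power_decreasing[of 1 k "1/2::real"] by auto
  then show ?thesis using enat by (simp add: exp_weight_enat)
qed (simp add: exp_weight_def)

lemma sum_le_by_parent_weights: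
  fixes h :: "'a \<Rightarrow> real" and par :: "'a \<Rightarrow> 'a" and a b :: real
  assumes "finite F" and "u \<in> F" and "q \<ge> 0"
    and par_in: "\<And>v. v \<in> F - {u} \<Longrightarrow> par v \<in> F"
    and h_par: "\<And>v. v \<in> F - {u} \<Longrightarrow> h v \<le> q * h (par v)"
    and h_nonneg: "\<And>v. v \<in> F \<Longrightarrow> 0 \<le> h v"
    and root_children: "real (card {v \<in> F - {u}. par v = u}) \<le> a"
    and children: "\<And>w. w \<in> F - {u} \<Longrightarrow> real (card {v \<in> F - {u}. par v = w}) \<le> b"
  shows "(1 - q * b) * (\<Sum>v\<in>F - {u}. h v) \<le> q * a * h u"
proof -
  let ?A = "F - {u}" and ?C = "\<lambda>w. {v \<in> F - {u}. par v = w}"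
  have "(\<Sum>v\<in>?A. h v) \<le> (\<Sum>v\<in>?A. q * h (par v))" by (rule sum_mono) (rule h_par)
  also have "\<dots> = (\<Sum>w\<in>F. \<Sum>v\<in>?C w. q * h (par v))"
    by (rule sum.group[symmetric]) (use assms(1) par_in in auto)
  also have "\<dots> = (\<Sum>w\<in>F. q * h w * card (?C w))" by (rule sum.cong) auto
  also have "\<dots> = q * h u * card (?C u) + (\<Sum>w\<in>?A. q * h w * card (?C w))"
    using assms(1,2) by (simp add: sum.remove)
  also have "\<dots> \<le> q * h u * a + (\<Sum>w\<in>?A. q * h w * b)"
  proof (rule add_mono)
    show "q * h u * card (?C u) \<le> q * h u * a"
      using root_children h_nonneg[OF assms(2)] assms(3) by (intro mult_left_mono) auto
    show "(\<Sum>w\<in>?A. q * h w * card (?C w)) \<le> (\<Sum>w\<in>?A. q * h w * b)"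
      using children h_nonneg assms(3) by (intro sum_mono mult_left_mono) auto
  qed
  also have "\<dots> = q * a * h u + q * b * (\<Sum>v\<in>?A. h v)"
    by (simp add: sum_distrib_left sum_distrib_right algebra_simps)
  finally show ?thesis by (simp add: algebra_simps)
qed

lemma card_parent_fibre_le_degree:
  assumes "simple_graph V E" and par_edge: "\<And>v. v \<in> A \<Longrightarrow> E (par v) v"
    and "P \<subseteq> {v. E w v}" and "P \<inter> {v \<in> A. par v = w} = {}"
  shows "card {v \<in> A. par v = w} + card P \<le> degree E w"
proof -
  have fin: "finite {v. E w v}"
    using assms(1) unfolding simple_graph_def by (auto intro: finite_subset)
  have "{v \<in> A. par v = w} \<subseteq> {v. E w v}"
    using par_edge assms(1) unfolding simple_graph_def by blast
  then have "card ({v \<in> A. par v = w} \<union> P) \<le> degree E w"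
    unfolding degree_def using assms(3) fin by (intro card_mono) auto
  moreover have "finite {v \<in> A. par v = w}" "finite P"
    using \<open>{v \<in> A. par v = w} \<subseteq> {v. E w v}\<close> assms(3) fin by (auto intro: finite_subset)
  ultimately show ?thesis using assms(4) by (simp add: card_Un_disjoint Int_commute)
qed

lemma card_children_le_degree:
  fixes rank :: "'a \<Rightarrow> nat"
  assumes sg: "simple_graph V E" and par_edge: "\<And>v. v \<in> A \<Longrightarrow> E (par v) v"
    and rank_par: "\<And>v. v \<in> A \<Longrightarrow> rank (par v) < rank v"
  shows "card {v \<in> A. par v = w} + (if w \<in> A then 1 else 0) \<le> degree E w"
proof (cases "w \<in> A")
  case True
  have "par w \<notin> {v \<in> A. par v = w}" using rank_par[of w] rank_par[of "par w"] True by auto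
  moreover have "E w (par w)" using par_edge[OF True] sg by (simp add: simple_graph_def)
  ultimately show ?thesis
    using card_parent_fibre_le_degree[OF sg par_edge, where P = "{par w}" and w = w] True by simp
next
  case False
  then show ?thesis using card_parent_fibre_le_degree[OF sg par_edge, where P = "{}" and w = w] by simp
qed

lemma sum_exp_weight_gdist_squared_eq:
  assumes "finite V"
  shows "(\<Sum>v\<in>V. (exp_weight (gdist V E u v))\<^sup>2)
    = (\<Sum>v\<in>{v\<in>V. gdist V E u v \<noteq> \<infinity>}. 4 * (1/4) ^ the_enat (gdist V E u v))"
proof -
  have "(\<Sum>v\<in>V. (exp_weight (gdist V E u v))\<^sup>2)
      = (\<Sum>v\<in>{v\<in>V. gdist V E u v \<noteq> \<infinity>}. (exp_weight (gdist V E u v))\<^sup>2)"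
    by (rule sum.mono_neutral_right) (use assms in \<open>auto simp: exp_weight_def\<close>)
  also have "\<dots> = (\<Sum>v\<in>{v\<in>V. gdist V E u v \<noteq> \<infinity>}. 4 * (1/4) ^ the_enat (gdist V E u v))"
    by (rule sum.cong) (auto simp: exp_weight_enat_squared[symmetric])
  finally show ?thesis .
qed

lemma sum_exp_weight_gdist_squared_le:
  assumes "subcubic V E" and "u \<in> V"
  shows "(\<Sum>v\<in>V. (exp_weight (gdist V E u v))\<^sup>2) \<le> 10"
proof -
  have sg: "simple_graph V E" and deg: "\<And>w. w \<in> V \<Longrightarrow> degree E w \<le> 3"
    using assms(1) by (auto simp: subcubic_def)
  have "finite V" using sg by (simp add: simple_graph_def)
  define F where "F = {v\<in>V. gdist V E u v \<noteq> \<infinity>}"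
  define A where "A = F - {u}"
  define dn where "dn v = the_enat (gdist V E u v)" for v
  define h where "h v = 4 * (1/4::real) ^ dn v" for v
  have F_enat: "v \<in> F \<Longrightarrow> gdist V E u v = enat (dn v)" for v by (auto simp: F_def dn_def)
  have "u \<in> F" and dn_u: "dn u = 0"
    using assms(2) gdist_self[OF assms(2), of E] by (simp_all add: F_def dn_def)
  obtain par where par_gdist: "\<And>v. v \<noteq> u \<Longrightarrow> gdist V E u v \<noteq> \<infinity> \<Longrightarrow>
      E (par v) v \<and> par v \<in> V \<and> gdist V E u (par v) \<noteq> \<infinity> \<and> dn (par v) < dn v"
    using gdist_parent_choice[OF sg] unfolding dn_def by blast
  have par: "E (par v) v" "par v \<in> F" "dn (par v) < dn v" if "v \<in> A" for v
    using par_gdist[of v] that by (auto simp: A_def F_def)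
  have "(1 - 1/4 * 2) * (\<Sum>v\<in>A. h v) \<le> 1/4 * 3 * h u"
    unfolding A_def
  proof (rule sum_le_by_parent_weights)
    show "finite F" using \<open>finite V\<close> by (simp add: F_def)
    show "h v \<le> 1/4 * h (par v)" if "v \<in> F - {u}" for v
    proof -
      have "(1/4::real) ^ dn v \<le> (1/4) ^ Suc (dn (par v))"
        using par(3)[of v] that by (intro power_decreasing) (auto simp: A_def Suc_le_eq)
      then show ?thesis by (simp add: h_def)
    qed
    have children: "card {v \<in> A. par v = w} + (if w \<in> A then 1 else 0) \<le> 3" if "w \<in> F" for w
      using card_children_le_degree[OF sg, of A par dn w] par(1,3) deg[of w] that
      by (simp add: F_def)
    show "real (card {v \<in> F - {u}. par v = u}) \<le> 3"
      using children[OF \<open>u \<in> F\<close>] by (simp add: A_def)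
    show "real (card {v \<in> F - {u}. par v = w}) \<le> 2" if "w \<in> F - {u}" for w
      using children[of w] that by (simp add: A_def)
  qed (use \<open>u \<in> F\<close> par(2) in \<open>auto simp: A_def h_def\<close>)
  then have non_root: "(\<Sum>v\<in>A. h v) \<le> 6" by (simp add: h_def dn_u)
  have "(\<Sum>v\<in>V. (exp_weight (gdist V E u v))\<^sup>2) = (\<Sum>v\<in>F. h v)"
    unfolding sum_exp_weight_gdist_squared_eq[OF \<open>finite V\<close>] F_def h_def dn_def ..
  also have "\<dots> = h u + (\<Sum>v\<in>A. h v)"
    unfolding A_def using \<open>finite V\<close> \<open>u \<in> F\<close> by (simp add: F_def sum.remove)
  finally show ?thesis using non_root by (simp add: h_def dn_u)
qed

lemma covering_card_le_linear:
  fixes w :: "'a \<Rightarrow> 'a \<Rightarrow> real" and x :: "'a \<Rightarrow> real"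
  assumes "finite V" and x_nonneg: "\<And>u. u \<in> V \<Longrightarrow> 0 \<le> x u"
    and cover: "\<And>v. v \<in> V \<Longrightarrow> 1 \<le> (\<Sum>u\<in>V. w u v * x u)"
    and w_self: "\<And>v. v \<in> V \<Longrightarrow> w v v \<le> 2"
    and w_other: "\<And>u v. u \<in> V \<Longrightarrow> v \<in> V \<Longrightarrow> u \<noteq> v \<Longrightarrow> w u v \<le> 1"
  shows "real (card V) \<le> (real (card V) + 1) * (\<Sum>u\<in>V. x u)"
proof -
  let ?S = "\<Sum>u\<in>V. x u"
  have "1 \<le> ?S + x v" if "v \<in> V" for v
  proof -
    have "1 \<le> w v v * x v + (\<Sum>u\<in>V-{v}. w u v * x u)"
      using cover[OF that] assms(1) that by (simp add: sum.remove)
    also have "\<dots> \<le> 2 * x v + (\<Sum>u\<in>V-{v}. x u)"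
      using that x_nonneg w_self w_other mult_left_le[of "w _ v" "x _"]
      by (intro add_mono mult_right_mono sum_mono) (auto simp: mult.commute)
    also have "\<dots> = x v + ?S" using assms(1) that by (simp add: sum.remove)
    finally show ?thesis by simp
  qed
  then have "(\<Sum>v\<in>V. 1) \<le> (\<Sum>v\<in>V. ?S + x v)" by (rule sum_mono)
  then show ?thesis by (simp add: sum.distrib algebra_simps)
qed

lemma covering_card_le_quadratic:
  fixes w :: "'a \<Rightarrow> 'a \<Rightarrow> real" and x :: "'a \<Rightarrow> real"
  assumes "finite V" and x_nonneg: "\<And>u. u \<in> V \<Longrightarrow> 0 \<le> x u"
    and cover: "\<And>v. v \<in> V \<Longrightarrow> 1 \<le> (\<Sum>u\<in>V. w u v * x u)"
    and squares: "\<And>u. u \<in> V \<Longrightarrow> (\<Sum>v\<in>V. (w u v)\<^sup>2) \<le> Q"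
  shows "real (card V) \<le> Q * (\<Sum>u\<in>V. x u)\<^sup>2"
proof -
  let ?S = "\<Sum>u\<in>V. x u"
  have "?S \<ge> 0" using x_nonneg by (simp add: sum_nonneg)
  have cauchy_schwarz: "1 \<le> ?S * (\<Sum>u\<in>V. x u * (w u v)\<^sup>2)" if "v \<in> V" for v
  proof -
    have "1 \<le> (\<Sum>u\<in>V. w u v * x u)\<^sup>2" using cover[OF that] by (simp add: one_le_power)
    also have "\<dots> = (\<Sum>u\<in>V. sqrt (x u) * (sqrt (x u) * w u v))\<^sup>2"
      using x_nonneg by (intro arg_cong[where f="\<lambda>t. t\<^sup>2"] sum.cong)
        (auto simp flip: mult.assoc)
    also have "\<dots> \<le> (\<Sum>u\<in>V. (sqrt (x u))\<^sup>2) * (\<Sum>u\<in>V. (sqrt (x u) * w u v)\<^sup>2)"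
      by (rule Cauchy_Schwarz_ineq_sum)
    also have "\<dots> = ?S * (\<Sum>u\<in>V. x u * (w u v)\<^sup>2)"
      using x_nonneg by (intro arg_cong2[where f="(*)"] sum.cong) (auto simp: power_mult_distrib)
    finally show ?thesis .
  qed
  have "(\<Sum>v\<in>V. 1) \<le> (\<Sum>v\<in>V. ?S * (\<Sum>u\<in>V. x u * (w u v)\<^sup>2))"
    using cauchy_schwarz by (rule sum_mono)
  also have "\<dots> = ?S * (\<Sum>u\<in>V. x u * (\<Sum>v\<in>V. (w u v)\<^sup>2))"
    unfolding sum_distrib_left[symmetric] by (subst sum.swap) (simp add: sum_distrib_left)
  also have "\<dots> \<le> ?S * (\<Sum>u\<in>V. x u * Q)"
    using x_nonneg squares \<open>?S \<ge> 0\<close> by (intro mult_left_mono sum_mono) auto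
  also have "\<dots> = ?S * ?S * Q" by (simp add: sum_distrib_right[symmetric])
  finally show ?thesis by (simp add: power2_eq_square mult.commute)
qed

lemma lower_bound_from_linear_and_quadratic:
  fixes S :: real and n :: nat
  assumes "n \<ge> 1" and linear: "real n \<le> (real n + 1) * S" and quadratic: "real n \<le> 10 * S\<^sup>2"
  shows "(1/6) * (sqrt (2 * real n + 49/36) + 7/6) \<le> S"
proof -
  define t where "t = real n / (real n + 1)"
  have "S \<ge> t" using linear by (simp add: t_def field_simps)
  have "t \<ge> 1/2" using assms(1) by (simp add: t_def field_simps)
  have key: "real n \<le> 18 * S\<^sup>2 - 7 * S"
  proof (cases "n \<le> 8")
    case True
    text \<open>For small n the linear bound alone suffices, 18 t^2 - 7 t being increasing for t \<ge> 1/2.\<close>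
    have "18 * S\<^sup>2 - 7 * S - (18 * t\<^sup>2 - 7 * t) = (S - t) * (18 * (S + t) - 7)"
      by (simp add: algebra_simps power2_eq_square)
    also have "\<dots> \<ge> 0" using \<open>S \<ge> t\<close> \<open>t \<ge> 1/2\<close> by (intro mult_nonneg_nonneg) auto
    finally have "18 * t\<^sup>2 - 7 * t \<le> 18 * S\<^sup>2 - 7 * S" by simp
    moreover have "n \<in> {1, 2, 3, 4, 5, 6, 7, 8}" using True assms(1) by auto
    then have "real n \<le> 18 * t\<^sup>2 - 7 * t" by (auto simp: t_def power2_eq_square)
    ultimately show ?thesis by simp
  next
    case False
    then have "t \<ge> 9/10" by (simp add: t_def field_simps)
    then have "7 * S \<le> 8 * S\<^sup>2" using \<open>S \<ge> t\<close> by (simp add: power2_eq_square)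
    then show ?thesis using quadratic by simp
  qed
  have "sqrt (2 * real n + 49/36) \<le> sqrt ((6 * S - 7/6)\<^sup>2)"
    using key by (intro real_sqrt_le_mono) (simp add: power2_eq_square algebra_simps)
  also have "\<dots> = 6 * S - 7/6" using \<open>S \<ge> t\<close> \<open>t \<ge> 1/2\<close> by simp
  finally show ?thesis by simp
qed

lemma frac_porous_exp_dom_greatest:
  assumes "finite V"
    and "\<And>x. \<forall>u\<in>V. 0 \<le> x u \<Longrightarrow> \<forall>v\<in>V. (\<Sum>u\<in>V. exp_weight (gdist V E u v) * x u) \<ge> 1 \<Longrightarrow>
      c \<le> (\<Sum>u\<in>V. x u)"
  shows "c \<le> frac_porous_exp_dom V E"
  unfolding frac_porous_exp_dom_def
proof (rule cInf_greatest)
  have "(\<Sum>u\<in>V. exp_weight (gdist V E u v) * 1) \<ge> 1" if "v \<in> V" for v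
  proof -
    have "exp_weight (gdist V E v v) * 1 \<le> (\<Sum>u\<in>V. exp_weight (gdist V E u v) * 1)"
      by (rule member_le_sum) (use that assms(1) exp_weight_nonneg in auto)
    then show ?thesis using exp_weight_gdist_self[OF that] by simp
  qed
  then have "(\<Sum>u\<in>V. 1) \<in> {(\<Sum>u\<in>V. x u) | x :: 'a \<Rightarrow> real. (\<forall>u\<in>V. 0 \<le> x u) \<and>
      (\<forall>v\<in>V. (\<Sum>u\<in>V. exp_weight (gdist V E u v) * x u) \<ge> 1)}"
    by (intro CollectI exI[of _ "\<lambda>_. 1"]) simp
  then show "{(\<Sum>u\<in>V. x u) | x :: 'a \<Rightarrow> real. (\<forall>u\<in>V. 0 \<le> x u) \<and>
      (\<forall>v\<in>V. (\<Sum>u\<in>V. exp_weight (gdist V E u v) * x u) \<ge> 1)} \<noteq> {}" by blast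
qed (use assms(2) in auto)

theorem corollary2:
  fixes V :: "'a set" and E :: "'a \<Rightarrow> 'a \<Rightarrow> bool" and n :: nat
  assumes "subcubic V E" and "card V = n" and "n \<ge> 1"
  shows "frac_porous_exp_dom V E \<ge> (1/6) * (sqrt (2 * real n + 49/36) + 7/6)"
proof -
  have "finite V" using assms(1) by (simp add: subcubic_def simple_graph_def)
  show ?thesis
  proof (rule frac_porous_exp_dom_greatest[OF \<open>finite V\<close>])
    fix x :: "'a \<Rightarrow> real"
    assume feasible: "\<forall>u\<in>V. 0 \<le> x u" "\<forall>v\<in>V. (\<Sum>u\<in>V. exp_weight (gdist V E u v) * x u) \<ge> 1"
    have "real n \<le> (real n + 1) * (\<Sum>u\<in>V. x u)"
      using covering_card_le_linear[OF \<open>finite V\<close>, where x = x and w = "\<lambda>u v. exp_weight (gdist V E u v)"] feasible assms(2)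
        exp_weight_gdist_self[of _ V E] exp_weight_gdist_le_1[where V = V and E = E] by auto
    moreover have "real n \<le> 10 * (\<Sum>u\<in>V. x u)\<^sup>2"
      using covering_card_le_quadratic[OF \<open>finite V\<close>, where x = x and w = "\<lambda>u v. exp_weight (gdist V E u v)"] feasible assms(2)
        sum_exp_weight_gdist_squared_le[OF assms(1)] by auto
    ultimately show "(1/6) * (sqrt (2 * real n + 49/36) + 7/6) \<le> (\<Sum>u\<in>V. x u)"
      using lower_bound_from_linear_and_quadratic[OF assms(3)] by blast
  qed
qed

end
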